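(* Let $B$ be a nonempty finite set, $T\in\omega$, $x\in\mathbb{R}_{\ge 0}$, and $S\subseteq\omega^B$. If $\mu_{T+1}(S)\ge x/(T+1+x)$, then $\mu_T(\partial S)\ge x/(T+x)$, where $0/0$ is interpreted as $0$ in the case $T=x=0$.
   Context: $\omega$ denotes the set of nonnegative integers and $\omega^B$ the set of functions $B\to\omega$ (multisets on $B$). For $b\in B$, $e_b\in\omega^B$ is the indicator of $b$. For $S\subseteq\omega^B$, $\partial S:=\{f\in\omega^B : f+e_b\in S\text{ for some }b\in B\}$. For $T\in\omega$, $\mu_T$ is the probability measure on $\omega^B$ that is uniform on $\{f\in\omega^B:\sum_{b\in B}f(b)=T\}$ and zero elsewhere. *)

theory Defs
  imports Complex_Main
begin

text \<open>Multisets on a finite nonempty set B are modelled as functions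
  'b \<Rightarrow> nat for a finite type 'b (standing for B).\<close>

definition unit_vec :: "'b \<Rightarrow> ('b \<Rightarrow> nat)" where
  "unit_vec b = (\<lambda>c. if c = b then 1 else 0)"

definition shadow :: "('b \<Rightarrow> nat) set \<Rightarrow> ('b \<Rightarrow> nat) set" where
  "shadow S = {f. \<exists>b. (\<lambda>c. f c + unit_vec b c) \<in> S}"

definition level :: "nat \<Rightarrow> ('b::finite \<Rightarrow> nat) set" where
  "level T = {f. (\<Sum>b\<in>UNIV. f b) = T}"

definition mu :: "nat \<Rightarrow> ('b::finite \<Rightarrow> nat) set \<Rightarrow> real" where
  "mu T S = real (card (S \<inter> level T)) / real (card (level T :: ('b \<Rightarrow> nat) set))"

end

theory Submission
  imports Defs "HOL-Library.Cardinality" "HOL-Library.Indicator_Function" "HOL-Analysis.Convex"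
begin

text \<open>Let \<open>A = S \<inter> level (T + 1)\<close>. The up-degree \<open>\<phi>(f) = \<Sum>\<^sub>b (f b + 1) [f + e\<^sub>b \<in> A]\<close> of
  \<open>f \<in> level T\<close> vanishes off the shadow, sums to \<open>(T + 1) |A|\<close>, and its square sums to
  \<open>(T + 1) (T + |B|) |A| - W\<close>, where \<open>W\<close> is the weight of the boundary edges \<open>g \<rightarrow> g - e\<^sub>b + e\<^sub>c\<close>
  leaving \<open>A\<close>. Cauchy-Schwarz on the shadow therefore turns a lower bound for \<open>W\<close> into a lower
  bound for the shadow.

  The lower bound for \<open>W\<close> is a Poincare inequality: for the Markov chain on multisets of size \<open>l\<close>
  on \<open>B\<close> that moves any number of elements from one point to another, the Dirichlet form of a
  centered function \<open>x\<close> is at least \<open>2 (l + |B| - 1) \<Sum> x\<^sup>2\<close>. It is proved by induction on \<open>|B|\<close>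
  and \<open>l\<close>, splitting on whether a new point is occupied. The Dirichlet form of the indicator of
  \<open>A\<close> is at most \<open>2 W\<close>, since every move out of \<open>A\<close> can be charged to the first boundary edge
  on its line. The outcome \<open>(T + 1) \<mu> \<le> \<mu>\<^sub>T(\<partial>S) (T + \<mu>)\<close> for \<open>\<mu> = \<mu>\<^sub>T\<^sub>+\<^sub>1(S)\<close> implies the
  theorem because \<open>\<mu> \<mapsto> (T + 1) \<mu> / (T + \<mu>)\<close> is increasing.\<close>

section \<open>Multisets of fixed size on a finite set\<close>

definition simplex :: "'b::finite set \<Rightarrow> nat \<Rightarrow> ('b \<Rightarrow> nat) set" where
  "simplex B l = {g. (\<forall>c. c \<notin> B \<longrightarrow> g c = 0) \<and> sum g B = l}"

definition transfer :: "('b \<Rightarrow> nat) \<Rightarrow> 'b \<Rightarrow> 'b \<Rightarrow> nat \<Rightarrow> ('b \<Rightarrow> nat)" where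
  "transfer g b c j = g(b := g b - j, c := g c + j)"

definition bump :: "'b \<Rightarrow> ('b \<Rightarrow> nat) \<Rightarrow> ('b \<Rightarrow> nat)" where
  "bump b g = g(b := Suc (g b))"

definition collapse :: "'b \<Rightarrow> 'b \<Rightarrow> ('b \<Rightarrow> nat) \<Rightarrow> ('b \<Rightarrow> nat)" where
  "collapse b0 c g = g(b0 := 0, c := g c + g b0)"

lemma level_eq_simplex: "level T = simplex UNIV T"
  by (simp add: level_def simplex_def)

lemma simplex_le: "g \<in> simplex B l \<Longrightarrow> g c \<le> l"
  by (cases "c \<in> B") (auto simp: simplex_def intro: member_le_sum[of c B g, THEN order_trans])

lemma finite_simplex [simp]: "finite (simplex B l)"
proof (rule finite_subset)
  show "simplex B l \<subseteq> PiE UNIV (\<lambda>_. {..l})"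
    by (auto simp: PiE_iff simplex_le)
qed (auto intro: finite_PiE)

lemma simplex_0: "simplex B 0 = {\<lambda>_. 0}"
  by (auto simp: simplex_def)

lemma simplex_empty: "simplex {} l = (if l = 0 then {\<lambda>_. 0} else {})"
  by (auto simp: simplex_def)

lemma simplex_singleton: "simplex {b0} l = {(\<lambda>_. 0)(b0 := l)}"
  by (auto simp: simplex_def fun_eq_iff)

lemma simplex_nonempty: "simplex UNIV l \<noteq> {}"
proof -
  have "(\<lambda>_. 0)(undefined := l) \<in> simplex UNIV l"
    by (simp add: simplex_def sum.remove[of UNIV undefined])
  then show ?thesis by blast
qed

lemma sum_simplex_real: "u \<in> simplex B l \<Longrightarrow> (\<Sum>c\<in>B. real (u c)) = real l"
  by (simp add: simplex_def flip: of_nat_sum)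

lemma sum_fun_upd_nat:
  fixes g :: "'b::finite \<Rightarrow> nat"
  assumes "b \<in> B"
  shows "sum (g(b := v)) B + g b = sum g B + v"
  using assms by (simp add: sum.remove[of B b])

lemma sum_fun_upd_outside: "b \<notin> B \<Longrightarrow> sum (g(b := v)) B = sum g B"
  by (rule sum.cong) auto

lemma sum_if_outside [simp]: "b \<notin> B \<Longrightarrow> (\<Sum>x\<in>B. if x = b then v else g x) = sum g B"
  by (rule sum.cong) auto

lemma transfer_in_simplex:
  assumes g: "g \<in> simplex B l" and "b \<in> B" "c \<in> B" "b \<noteq> c" "j \<le> g b"
  shows "transfer g b c j \<in> simplex B l"
proof -
  let ?g1 = "g(b := g b - j)"
  have "sum ?g1 B + g b = sum g B + (g b - j)"
    using \<open>b \<in> B\<close> by (rule sum_fun_upd_nat)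
  moreover have "sum (?g1(c := ?g1 c + j)) B + ?g1 c = sum ?g1 B + (?g1 c + j)"
    using \<open>c \<in> B\<close> by (rule sum_fun_upd_nat)
  ultimately show ?thesis
    using assms by (auto simp: transfer_def simplex_def)
qed

lemma transfer_0: "transfer g b c 0 = g"
  by (simp add: transfer_def)

lemma transfer_Suc: "b \<noteq> c \<Longrightarrow> Suc i \<le> g b \<Longrightarrow> transfer (transfer g b c i) b c 1 = transfer g b c (Suc i)"
  by (auto simp: transfer_def fun_eq_iff)

lemma transfer_transfer_back: "b \<noteq> c \<Longrightarrow> j \<le> g b \<Longrightarrow> transfer (transfer g b c j) c b j = g"
  by (auto simp: transfer_def fun_eq_iff)

lemma inj_bump: "inj (bump b0)"
  by (rule injI) (auto simp: bump_def fun_eq_iff split: if_splits)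

lemma bump_in_simplex: "f \<in> simplex UNIV T \<Longrightarrow> bump b f \<in> simplex UNIV (Suc T)"
  using sum_fun_upd_nat[of b UNIV f "Suc (f b)"] by (simp add: simplex_def bump_def)

lemma unbump_in_simplex: "g \<in> simplex UNIV (Suc T) \<Longrightarrow> g b \<noteq> 0 \<Longrightarrow> g(b := g b - 1) \<in> simplex UNIV T"
  using sum_fun_upd_nat[of b UNIV g "g b - 1"] by (simp add: simplex_def)

lemma simplex_eq_vanishing:
  assumes "b0 \<notin> B"
  shows "simplex B l = {g \<in> simplex (insert b0 B) l. g b0 = 0}"
  using assms unfolding simplex_def by (auto simp: sum.insert) (metis add_0)

lemma bump_image_simplex:
  assumes "b0 \<notin> B" and "0 < l"
  shows "bump b0 ` simplex (insert b0 B) (l - 1) = {g \<in> simplex (insert b0 B) l. g b0 \<noteq> 0}"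
proof (intro set_eqI iffI)
  fix g assume "g \<in> bump b0 ` simplex (insert b0 B) (l - 1)"
  then obtain h where h: "h \<in> simplex (insert b0 B) (l - 1)" and g: "g = bump b0 h" by auto
  have "sum g (insert b0 B) = Suc (h b0) + sum h B"
    using assms g by (simp add: sum.insert bump_def sum_fun_upd_outside)
  also have "\<dots> = l"
    using h assms by (simp add: simplex_def sum.insert)
  finally show "g \<in> {g \<in> simplex (insert b0 B) l. g b0 \<noteq> 0}"
    using h g by (auto simp: simplex_def bump_def)
next
  fix g assume g: "g \<in> {g \<in> simplex (insert b0 B) l. g b0 \<noteq> 0}"
  define h where "h = g(b0 := g b0 - 1)"
  have "g = bump b0 h"
    using g by (auto simp: h_def bump_def fun_eq_iff)
  moreover have "sum h (insert b0 B) = g b0 - 1 + sum g B"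
    using assms by (simp add: h_def sum.insert sum_fun_upd_outside)
  then have "h \<in> simplex (insert b0 B) (l - 1)"
    using g assms by (auto simp: simplex_def h_def sum.insert)
  ultimately show "g \<in> bump b0 ` simplex (insert b0 B) (l - 1)" by blast
qed

lemma sum_simplex_insert:
  assumes "b0 \<notin> B" and "0 < l"
  shows "(\<Sum>g\<in>simplex (insert b0 B) l. F g)
       = (\<Sum>g\<in>simplex B l. F g) + (\<Sum>h\<in>simplex (insert b0 B) (l - 1). F (bump b0 h))"
proof -
  have "simplex (insert b0 B) l = simplex B l \<union> bump b0 ` simplex (insert b0 B) (l - 1)"
    and "simplex B l \<inter> bump b0 ` simplex (insert b0 B) (l - 1) = {}"
    using simplex_eq_vanishing[OF assms(1), of l] bump_image_simplex[OF assms] by auto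
  then show ?thesis
    by (simp add: sum.union_disjoint sum.reindex[OF inj_on_subset[OF inj_bump]])
qed

lemma split_in_simplex:
  assumes "b0 \<notin> B" and u: "u \<in> simplex B l" and c: "c \<in> B" and "1 \<le> j" "j \<le> u c"
  shows "u(c := u c - j, b0 := j - 1) \<in> simplex (insert b0 B) (l - 1)"
proof -
  have "sum (u(c := u c - j)) B + u c = sum u B + (u c - j)"
    using c by (rule sum_fun_upd_nat)
  then show ?thesis
    using assms by (auto simp: simplex_def sum.insert sum_fun_upd_outside)
qed

lemma collapse_bump_in_simplex:
  assumes b0: "b0 \<notin> B" and l: "0 < l" and h: "h \<in> simplex (insert b0 B) (l - 1)" and c: "c \<in> B"
  shows "collapse b0 c (bump b0 h) \<in> simplex B l"
proof -
  let ?g = "(bump b0 h)(b0 := 0)"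
  have cb0: "c \<noteq> b0" using c b0 by auto
  have "sum (?g(c := ?g c + bump b0 h b0)) B + ?g c = sum ?g B + (?g c + bump b0 h b0)"
    using c by (rule sum_fun_upd_nat)
  moreover have "sum h (insert b0 B) = l - 1"
    using h by (simp add: simplex_def)
  ultimately have "sum (collapse b0 c (bump b0 h)) B = l"
    using b0 cb0 l by (simp add: collapse_def bump_def sum_fun_upd_outside sum.insert)
  then show ?thesis
    using h c by (auto simp: simplex_def collapse_def bump_def)
qed

text \<open>A configuration \<open>u\<close> on \<open>B\<close> together with a point \<open>c\<close> and a count \<open>1 \<le> j \<le> u c\<close>
  corresponds bijectively to a configuration \<open>h\<close> of one element less on \<open>insert b0 B\<close> together
  with \<open>c\<close>: remove \<open>j\<close> elements from \<open>c\<close> and put \<open>j - 1\<close> of them on \<open>b0\<close>.\<close>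

lemma sum_transfers_reindex_collapse:
  assumes b0: "b0 \<notin> B" and l: "0 < l"
  shows "(\<Sum>u\<in>simplex B l. \<Sum>c\<in>B. \<Sum>j\<in>{1..u c}. F u c j)
       = (\<Sum>h\<in>simplex (insert b0 B) (l - 1). \<Sum>c\<in>B. F (collapse b0 c (bump b0 h)) c (Suc (h b0)))"
proof -
  let ?S = "Sigma (simplex B l) (\<lambda>u. Sigma B (\<lambda>c. {1..u c}))"
  let ?T = "simplex (insert b0 B) (l - 1) \<times> B"
  have "(\<Sum>(u,c,j)\<in>?S. F u c j) = (\<Sum>(h,c)\<in>?T. F (collapse b0 c (bump b0 h)) c (Suc (h b0)))"
  proof (rule sum.reindex_bij_witness[where j = "\<lambda>(u,c,j). (u(c := u c - j, b0 := j - 1), c)"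
        and i = "\<lambda>(h,c). (collapse b0 c (bump b0 h), c, Suc (h b0))"])
    fix a assume "a \<in> ?S"
    moreover obtain u c j where a: "a = (u,c,j)" by (cases a) auto
    ultimately have u: "u \<in> simplex B l" and c: "c \<in> B" and j: "1 \<le> j" "j \<le> u c" by auto
    have "c \<noteq> b0" and "u b0 = 0" using u c b0 by (auto simp: simplex_def)
    then have "collapse b0 c (bump b0 (u(c := u c - j, b0 := j - 1))) = u"
      using j by (auto simp: collapse_def bump_def fun_eq_iff)
    then show "(\<lambda>(h,c). (collapse b0 c (bump b0 h), c, Suc (h b0))) ((\<lambda>(u,c,j). (u(c := u c - j, b0 := j - 1), c)) a) = a"
      and "(\<lambda>(h,c). F (collapse b0 c (bump b0 h)) c (Suc (h b0))) ((\<lambda>(u,c,j). (u(c := u c - j, b0 := j - 1), c)) a)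
         = (\<lambda>(u,c,j). F u c j) a"
      using a j by auto
    show "(\<lambda>(u,c,j). (u(c := u c - j, b0 := j - 1), c)) a \<in> ?T"
      using split_in_simplex[OF b0 u c j] a c by simp
  next
    fix a assume "a \<in> ?T"
    moreover obtain h c where a: "a = (h,c)" by (cases a) auto
    ultimately have h: "h \<in> simplex (insert b0 B) (l - 1)" and c: "c \<in> B" by auto
    have cb0: "c \<noteq> b0" using c b0 by auto
    then show "(\<lambda>(u,c,j). (u(c := u c - j, b0 := j - 1), c)) ((\<lambda>(h,c). (collapse b0 c (bump b0 h), c, Suc (h b0))) a) = a"
      using a by (auto simp: collapse_def bump_def fun_eq_iff)
    have "Suc (h b0) \<le> collapse b0 c (bump b0 h) c"
      using cb0 by (simp add: collapse_def bump_def)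
    then show "(\<lambda>(h,c). (collapse b0 c (bump b0 h), c, Suc (h b0))) a \<in> ?S"
      using collapse_bump_in_simplex[OF b0 l h c] a c by simp
  qed
  then show ?thesis
    by (simp add: sum.Sigma sum.cartesian_product)
qed

lemma sum_collapse:
  assumes b0: "b0 \<notin> B" and l: "0 < l"
  shows "(\<Sum>h\<in>simplex (insert b0 B) (l - 1). \<Sum>c\<in>B. G (collapse b0 c (bump b0 h)))
       = real l * (\<Sum>u\<in>simplex B l. G u)"
proof -
  have "(\<Sum>h\<in>simplex (insert b0 B) (l - 1). \<Sum>c\<in>B. G (collapse b0 c (bump b0 h)))
      = (\<Sum>u\<in>simplex B l. (\<Sum>c\<in>B. real (u c)) * G u)"
    using sum_transfers_reindex_collapse[OF b0 l, of "\<lambda>u c j. G u"] by (simp add: sum_distrib_right)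
  also have "\<dots> = (\<Sum>u\<in>simplex B l. real l * G u)"
    by (rule sum.cong[OF refl]) (simp add: sum_simplex_real)
  finally show ?thesis by (simp add: sum_distrib_left)
qed

lemma transfer_collapse:
  "c \<noteq> b0 \<Longrightarrow> c' \<noteq> b0 \<Longrightarrow> c' \<noteq> c \<Longrightarrow>
    transfer (collapse b0 c (bump b0 h)) c c' (Suc (h b0)) = collapse b0 c' (bump b0 h)"
  by (auto simp: transfer_def bump_def collapse_def fun_eq_iff)

lemma sum_collapse_pairs:
  assumes b0: "b0 \<notin> B" and l: "0 < l"
  shows "(\<Sum>h\<in>simplex (insert b0 B) (l - 1). \<Sum>c\<in>B. \<Sum>c'\<in>B - {c}. G (collapse b0 c (bump b0 h)) (collapse b0 c' (bump b0 h)))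
      = (\<Sum>u\<in>simplex B l. \<Sum>c\<in>B. \<Sum>c'\<in>B - {c}. \<Sum>j\<in>{1..u c}. G u (transfer u c c' j))"
proof -
  have "(\<Sum>u\<in>simplex B l. \<Sum>c\<in>B. \<Sum>c'\<in>B - {c}. \<Sum>j\<in>{1..u c}. G u (transfer u c c' j))
      = (\<Sum>u\<in>simplex B l. \<Sum>c\<in>B. \<Sum>j\<in>{1..u c}. \<Sum>c'\<in>B - {c}. G u (transfer u c c' j))"
    by (intro sum.cong refl sum.swap)
  also have "\<dots> = (\<Sum>h\<in>simplex (insert b0 B) (l - 1). \<Sum>c\<in>B. \<Sum>c'\<in>B - {c}.
          G (collapse b0 c (bump b0 h)) (transfer (collapse b0 c (bump b0 h)) c c' (Suc (h b0))))"
    by (rule sum_transfers_reindex_collapse[OF b0 l])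
  also have "\<dots> = (\<Sum>h\<in>simplex (insert b0 B) (l - 1). \<Sum>c\<in>B. \<Sum>c'\<in>B - {c}.
          G (collapse b0 c (bump b0 h)) (collapse b0 c' (bump b0 h)))"
    using b0 by (intro sum.cong refl) (metis DiffE insertI1 transfer_collapse)
  finally show ?thesis by simp
qed

section \<open>The Dirichlet form of the transfer chain\<close>

definition edge_energy :: "'b::finite set \<Rightarrow> (('b \<Rightarrow> nat) \<Rightarrow> real) \<Rightarrow> ('b \<Rightarrow> nat) \<Rightarrow> real" where
  "edge_energy B x g = (\<Sum>b\<in>B. \<Sum>c\<in>B - {b}. \<Sum>j\<in>{1..g b}. (x g - x (transfer g b c j))\<^sup>2)"

definition dirichlet :: "'b::finite set \<Rightarrow> nat \<Rightarrow> (('b \<Rightarrow> nat) \<Rightarrow> real) \<Rightarrow> real" where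
  "dirichlet B l x = (\<Sum>g\<in>simplex B l. edge_energy B x g)"

lemma dirichlet_shift: "dirichlet B l (\<lambda>g. x g - m) = dirichlet B l x"
  by (simp add: dirichlet_def edge_energy_def)

lemma dirichlet_nonneg: "0 \<le> dirichlet B l x"
  by (simp add: dirichlet_def edge_energy_def sum_nonneg)

lemma edge_energy_insert_vanishing:
  assumes b0: "b0 \<notin> B" and g: "g b0 = 0"
  shows "edge_energy (insert b0 B) x g
       = edge_energy B x g + (\<Sum>b\<in>B. \<Sum>j\<in>{1..g b}. (x g - x (transfer g b b0 j))\<^sup>2)"
proof -
  have "insert b0 B - {b} = insert b0 (B - {b})" if "b \<in> B" for b
    using that b0 by auto
  then have "(\<Sum>b\<in>B. \<Sum>c\<in>insert b0 B - {b}. \<Sum>j\<in>{1..g b}. (x g - x (transfer g b c j))\<^sup>2)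
      = (\<Sum>b\<in>B. (\<Sum>j\<in>{1..g b}. (x g - x (transfer g b b0 j))\<^sup>2)
              + (\<Sum>c\<in>B - {b}. \<Sum>j\<in>{1..g b}. (x g - x (transfer g b c j))\<^sup>2))"
    using b0 by (intro sum.cong refl) (simp add: sum.insert)
  then show ?thesis
    using b0 g by (simp add: edge_energy_def sum.insert sum.distrib)
qed

lemma transfer_bump: "b \<noteq> b0 \<Longrightarrow> b \<noteq> c \<Longrightarrow> transfer (bump b0 h) b c j = bump b0 (transfer h b c j)"
  by (auto simp: transfer_def bump_def fun_eq_iff)

lemma transfer_bump_from: "c \<noteq> b0 \<Longrightarrow> j \<le> h b0 \<Longrightarrow> transfer (bump b0 h) b0 c j = bump b0 (transfer h b0 c j)"
  by (auto simp: transfer_def bump_def fun_eq_iff)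

lemma transfer_bump_all: "c \<noteq> b0 \<Longrightarrow> transfer (bump b0 h) b0 c (Suc (h b0)) = collapse b0 c (bump b0 h)"
  by (auto simp: transfer_def bump_def collapse_def fun_eq_iff)

lemma transfer_collapse_back: "c \<noteq> b0 \<Longrightarrow> transfer (collapse b0 c (bump b0 h)) c b0 (Suc (h b0)) = bump b0 h"
  by (auto simp: transfer_def bump_def collapse_def fun_eq_iff)

text \<open>Every move out of \<open>bump b0 h\<close> is a move out of \<open>h\<close> lifted by \<open>bump b0\<close>, except the moves
  emptying \<open>b0\<close> completely.\<close>

lemma edge_energy_insert_bump:
  assumes b0: "b0 \<notin> B"
  shows "edge_energy (insert b0 B) x (bump b0 h)
       = edge_energy (insert b0 B) (\<lambda>h. x (bump b0 h)) h
         + (\<Sum>c\<in>B. (x (bump b0 h) - x (collapse b0 c (bump b0 h)))\<^sup>2)"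
proof -
  let ?g = "bump b0 h"
  define G where "G b = (\<Sum>c\<in>insert b0 B - {b}. \<Sum>j\<in>{1..h b}. (x ?g - x (bump b0 (transfer h b c j)))\<^sup>2)" for b
  have Bb0: "insert b0 B - {b0} = B" using b0 by auto
  have old: "(\<Sum>c\<in>insert b0 B - {b}. \<Sum>j\<in>{1..?g b}. (x ?g - x (transfer ?g b c j))\<^sup>2) = G b"
    if "b \<in> B" for b
  proof -
    have "b \<noteq> b0" using that b0 by auto
    then have "?g b = h b" and "transfer ?g b c j = bump b0 (transfer h b c j)" if "c \<noteq> b" for c j
      using that by (simp add: bump_def, simp add: transfer_bump)
    then show ?thesis
      unfolding G_def by (intro sum.cong refl) auto
  qed
  have new: "(\<Sum>j\<in>{1..?g b0}. (x ?g - x (transfer ?g b0 c j))\<^sup>2)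
      = (\<Sum>j\<in>{1..h b0}. (x ?g - x (bump b0 (transfer h b0 c j)))\<^sup>2) + (x ?g - x (collapse b0 c ?g))\<^sup>2"
    if "c \<in> B" for c
  proof -
    have cb0: "c \<noteq> b0" using that b0 by auto
    have "(\<Sum>j\<in>{1..h b0}. (x ?g - x (transfer ?g b0 c j))\<^sup>2)
        = (\<Sum>j\<in>{1..h b0}. (x ?g - x (bump b0 (transfer h b0 c j)))\<^sup>2)"
      by (rule sum.cong[OF refl]) (simp add: transfer_bump_from[OF cb0])
    then show ?thesis
      by (simp add: bump_def transfer_bump_all[OF cb0, unfolded bump_def])
  qed
  have "edge_energy (insert b0 B) x ?g
      = (\<Sum>c\<in>B. \<Sum>j\<in>{1..?g b0}. (x ?g - x (transfer ?g b0 c j))\<^sup>2) + (\<Sum>b\<in>B. G b)"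
    using b0 old by (simp add: edge_energy_def sum.insert Bb0)
  also have "\<dots> = G b0 + (\<Sum>c\<in>B. (x ?g - x (collapse b0 c ?g))\<^sup>2) + (\<Sum>b\<in>B. G b)"
    using new by (simp add: G_def Bb0 sum.distrib)
  finally show ?thesis
    using b0 by (simp add: edge_energy_def G_def sum.insert)
qed

lemma sum_transfers_to_new_point:
  fixes x :: "('b::finite \<Rightarrow> nat) \<Rightarrow> real"
  assumes b0: "b0 \<notin> B" and l: "0 < l"
  shows "(\<Sum>g\<in>simplex B l. \<Sum>b\<in>B. \<Sum>j\<in>{1..g b}. (x g - x (transfer g b b0 j))\<^sup>2)
       = (\<Sum>h\<in>simplex (insert b0 B) (l - 1). \<Sum>c\<in>B. (x (bump b0 h) - x (collapse b0 c (bump b0 h)))\<^sup>2)"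
  unfolding sum_transfers_reindex_collapse[OF b0 l]
proof (intro sum.cong refl)
  fix h c assume "c \<in> B"
  then have "c \<noteq> b0" using b0 by auto
  show "(x (collapse b0 c (bump b0 h)) - x (transfer (collapse b0 c (bump b0 h)) c b0 (Suc (h b0))))\<^sup>2
      = (x (bump b0 h) - x (collapse b0 c (bump b0 h)))\<^sup>2"
    unfolding transfer_collapse_back[OF \<open>c \<noteq> b0\<close>] by (rule power2_commute)
qed

lemma dirichlet_insert:
  assumes b0: "b0 \<notin> B" and l: "0 < l"
  shows "dirichlet (insert b0 B) l x = dirichlet B l x + dirichlet (insert b0 B) (l - 1) (\<lambda>h. x (bump b0 h))
      + 2 * (\<Sum>h\<in>simplex (insert b0 B) (l - 1). \<Sum>c\<in>B. (x (bump b0 h) - x (collapse b0 c (bump b0 h)))\<^sup>2)"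
proof -
  have "dirichlet (insert b0 B) l x
      = (\<Sum>g\<in>simplex B l. edge_energy (insert b0 B) x g)
        + (\<Sum>h\<in>simplex (insert b0 B) (l - 1). edge_energy (insert b0 B) x (bump b0 h))"
    unfolding dirichlet_def by (rule sum_simplex_insert[OF b0 l])
  also have "(\<Sum>g\<in>simplex B l. edge_energy (insert b0 B) x g)
      = dirichlet B l x + (\<Sum>g\<in>simplex B l. \<Sum>b\<in>B. \<Sum>j\<in>{1..g b}. (x g - x (transfer g b b0 j))\<^sup>2)"
  proof -
    have "edge_energy (insert b0 B) x g
        = edge_energy B x g + (\<Sum>b\<in>B. \<Sum>j\<in>{1..g b}. (x g - x (transfer g b b0 j))\<^sup>2)"
      if "g \<in> simplex B l" for g
      using that b0 by (intro edge_energy_insert_vanishing) (auto simp: simplex_def)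
    then show ?thesis
      by (simp add: dirichlet_def sum.distrib)
  qed
  also have "(\<Sum>h\<in>simplex (insert b0 B) (l - 1). edge_energy (insert b0 B) x (bump b0 h))
      = dirichlet (insert b0 B) (l - 1) (\<lambda>h. x (bump b0 h))
        + (\<Sum>h\<in>simplex (insert b0 B) (l - 1). \<Sum>c\<in>B. (x (bump b0 h) - x (collapse b0 c (bump b0 h)))\<^sup>2)"
    using b0 by (simp add: dirichlet_def edge_energy_insert_bump sum.distrib)
  finally show ?thesis
    unfolding sum_transfers_to_new_point[OF b0 l] by simp
qed

section \<open>The Poincare inequality\<close>

lemma sum_transfers_const:
  "(\<Sum>u\<in>simplex B l. \<Sum>c\<in>B. \<Sum>c'\<in>B - {c}. \<Sum>j\<in>{1..u c}. G u)
     = (real (card B) - 1) * real l * (\<Sum>u\<in>simplex B l. G u)"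
proof -
  have "(\<Sum>c\<in>B. \<Sum>c'\<in>B - {c}. \<Sum>j\<in>{1..u c}. G u) = (real (card B) - 1) * real l * G u"
    if u: "u \<in> simplex B l" for u
  proof -
    have "(\<Sum>c\<in>B. \<Sum>c'\<in>B - {c}. \<Sum>j\<in>{1..u c}. G u) = (\<Sum>c\<in>B. (real (card B) - 1) * (real (u c) * G u))"
    proof (rule sum.cong[OF refl])
      fix c assume "c \<in> B"
      then have "1 \<le> card B" by (auto simp: Suc_le_eq card_gt_0_iff)
      with \<open>c \<in> B\<close> show "(\<Sum>c'\<in>B - {c}. \<Sum>j\<in>{1..u c}. G u) = (real (card B) - 1) * (real (u c) * G u)"
        by (simp add: of_nat_diff)
    qed
    also have "\<dots> = (real (card B) - 1) * ((\<Sum>c\<in>B. real (u c)) * G u)"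
      by (simp add: sum_distrib_left sum_distrib_right)
    finally show ?thesis using sum_simplex_real[OF u] by simp
  qed
  then show ?thesis by (simp add: sum_distrib_left)
qed

lemma sum_transfers_reverse:
  "(\<Sum>u\<in>simplex B l. \<Sum>c\<in>B. \<Sum>c'\<in>B - {c}. \<Sum>j\<in>{1..u c}. G (transfer u c c' j))
     = (\<Sum>u\<in>simplex B l. \<Sum>c\<in>B. \<Sum>c'\<in>B - {c}. \<Sum>j\<in>{1..u c}. G u)"
proof -
  let ?I = "Sigma (simplex B l) (\<lambda>u. Sigma B (\<lambda>c. Sigma (B - {c}) (\<lambda>c'. {1..u c})))"
  let ?r = "\<lambda>(u,c,c',j). (transfer u c c' j, c', c, j)"
  have r: "?r a \<in> ?I \<and> ?r (?r a) = a" if "a \<in> ?I" for a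
  proof -
    obtain u c c' j where a: "a = (u,c,c',j)" by (cases a) auto
    have u: "u \<in> simplex B l" and c: "c \<in> B" "c' \<in> B" "c \<noteq> c'" and j: "1 \<le> j" "j \<le> u c"
      using that a by auto
    have "transfer u c c' j \<in> simplex B l" and "transfer u c c' j c' = u c' + j"
      using transfer_in_simplex[OF u c j(2)] by (simp_all add: transfer_def)
    then show ?thesis
      using a c j by (simp add: transfer_transfer_back)
  qed
  have Sigma: "(\<Sum>u\<in>simplex B l. \<Sum>c\<in>B. \<Sum>c'\<in>B - {c}. \<Sum>j\<in>{1..u c}. H u c c' j)
      = (\<Sum>(u,c,c',j)\<in>?I. H u c c' j)" for H :: "_ \<Rightarrow> _ \<Rightarrow> _ \<Rightarrow> _ \<Rightarrow> 'a"
    by (simp add: sum.Sigma)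
  have "(\<Sum>(u,c,c',j)\<in>?I. G (transfer u c c' j)) = (\<Sum>(u,c,c',j)\<in>?I. G u)"
    by (rule sum.reindex_bij_witness[where i = ?r and j = ?r]) (use r in auto)
  then show ?thesis
    unfolding Sigma .
qed

lemma sum_square_centered:
  fixes y :: "'a \<Rightarrow> real"
  assumes "finite A" and "(\<Sum>g\<in>A. y g) = 0"
  shows "(\<Sum>g\<in>A. (y g + m)\<^sup>2) = (\<Sum>g\<in>A. (y g)\<^sup>2) + real (card A) * m\<^sup>2"
proof -
  have "(\<Sum>g\<in>A. (y g + m)\<^sup>2) = (\<Sum>g\<in>A. (y g)\<^sup>2 + 2 * m * y g + m\<^sup>2)"
    by (rule sum.cong) (auto simp: power2_eq_square algebra_simps)
  with assms show ?thesis
    by (simp add: sum.distrib flip: sum_distrib_left)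
qed

lemma card_mult_mean: "finite A \<Longrightarrow> real (card A) * ((\<Sum>g\<in>A. f g) / real (card A)) = (\<Sum>g\<in>A. f g)"
  by (cases "card A = 0") auto

lemma sum_minus_mean: "finite A \<Longrightarrow> (\<Sum>g\<in>A. f g - (\<Sum>g\<in>A. f g) / real (card A)) = (0::real)"
  by (cases "card A = 0") (simp_all add: sum_subtractf)

lemma square_sum_expand:
  fixes a :: "'c \<Rightarrow> real"
  assumes "finite B"
  shows "(\<Sum>c\<in>B. a c)\<^sup>2 = (\<Sum>c\<in>B. (a c)\<^sup>2) + (\<Sum>c\<in>B. \<Sum>c'\<in>B - {c}. a c * a c')"
proof -
  have "(\<Sum>c'\<in>B. a c * a c') = (a c)\<^sup>2 + (\<Sum>c'\<in>B - {c}. a c * a c')" if "c \<in> B" for c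
    using sum.remove[OF assms that, of "\<lambda>c'. a c * a c'"] by (simp add: power2_eq_square)
  then show ?thesis
    by (simp add: power2_eq_square sum_product sum.distrib)
qed

lemma two_sum_mult_le:
  fixes eta zeta :: "'c \<Rightarrow> real"
  assumes "finite A" and s: "0 \<le> s" and Z: "(\<Sum>h\<in>A. (zeta h)\<^sup>2) \<le> s * q" and "0 \<le> q"
  shows "2 * (\<Sum>h\<in>A. eta h * zeta h) \<le> s * (\<Sum>h\<in>A. (eta h)\<^sup>2) + q"
proof (cases "s = 0")
  case True
  then have "\<forall>h\<in>A. zeta h = 0"
    using Z sum_nonneg_eq_0_iff[OF \<open>finite A\<close>, of "\<lambda>h. (zeta h)\<^sup>2"] by (simp add: order_antisym sum_nonneg)
  with True \<open>0 \<le> q\<close> show ?thesis by simp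
next
  case False
  then have s: "0 < s" using s by simp
  have "2 * (eta h * zeta h) \<le> s * (eta h)\<^sup>2 + (zeta h)\<^sup>2 / s" for h
  proof -
    have "0 \<le> (s * eta h - zeta h)\<^sup>2" by simp
    then show ?thesis using s by (simp add: field_simps power2_eq_square)
  qed
  then have "2 * (\<Sum>h\<in>A. eta h * zeta h) \<le> s * (\<Sum>h\<in>A. (eta h)\<^sup>2) + (\<Sum>h\<in>A. (zeta h)\<^sup>2) / s"
    by (simp add: sum_distrib_left sum_divide_distrib sum_mono flip: sum.distrib)
  also have "(\<Sum>h\<in>A. (zeta h)\<^sup>2) / s \<le> q" using Z s by (simp add: divide_le_eq mult.commute)
  finally show ?thesis by simp
qed

lemma sum_square_sum_collapse_le:
  fixes xi :: "('b::finite \<Rightarrow> nat) \<Rightarrow> real"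
  assumes b0: "b0 \<notin> B" and l: "0 < l"
    and IH: "2 * (real l + real (card B) - 1) * (\<Sum>u\<in>simplex B l. (xi u)\<^sup>2) \<le> dirichlet B l xi"
  shows "(\<Sum>h\<in>simplex (insert b0 B) (l - 1). (\<Sum>c\<in>B. xi (collapse b0 c (bump b0 h)))\<^sup>2)
       \<le> (real l - 1) * (real (card B) - 1) * (\<Sum>u\<in>simplex B l. (xi u)\<^sup>2)"
proof -
  let ?Q = "\<Sum>u\<in>simplex B l. (xi u)\<^sup>2"
  let ?Off = "\<Sum>u\<in>simplex B l. \<Sum>c\<in>B. \<Sum>c'\<in>B - {c}. \<Sum>j\<in>{1..u c}. xi u * xi (transfer u c c' j)"
  have "(\<Sum>h\<in>simplex (insert b0 B) (l - 1). (\<Sum>c\<in>B. xi (collapse b0 c (bump b0 h)))\<^sup>2) = real l * ?Q + ?Off"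
    using sum_collapse[OF b0 l, of "\<lambda>u. (xi u)\<^sup>2"] sum_collapse_pairs[OF b0 l, of "\<lambda>a b. xi a * xi b"]
    by (simp add: square_sum_expand sum.distrib)
  moreover have "dirichlet B l xi = (\<Sum>u\<in>simplex B l. \<Sum>c\<in>B. \<Sum>c'\<in>B - {c}. \<Sum>j\<in>{1..u c}.
        (xi u)\<^sup>2 + (xi (transfer u c c' j))\<^sup>2 - 2 * (xi u * xi (transfer u c c' j)))"
    unfolding dirichlet_def edge_energy_def
    by (intro sum.cong refl) (simp add: power2_eq_square algebra_simps)
  then have "dirichlet B l xi = 2 * ((real (card B) - 1) * real l * ?Q) - 2 * ?Off"
    using sum_transfers_const[of "\<lambda>u. (xi u)\<^sup>2" B l] sum_transfers_reverse[of "\<lambda>u. (xi u)\<^sup>2" B l]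
    by (simp add: sum.distrib sum_subtractf sum_distrib_left)
  ultimately show ?thesis
    using IH by (simp add: algebra_simps)
qed

lemma sum_square_diff_const:
  fixes y :: "'c \<Rightarrow> real"
  shows "(\<Sum>c\<in>B. (a - y c)\<^sup>2) = real (card B) * a\<^sup>2 - 2 * a * (\<Sum>c\<in>B. y c) + (\<Sum>c\<in>B. (y c)\<^sup>2)"
  by (simp add: power2_diff sum.distrib sum_subtractf sum_distrib_left mult.assoc)

lemma sum_collapse_square_ge:
  fixes xi eta :: "('b::finite \<Rightarrow> nat) \<Rightarrow> real"
  assumes b0: "b0 \<notin> B" and "B \<noteq> {}" and l: "0 < l"
    and xi: "(\<Sum>u\<in>simplex B l. xi u) = 0"
    and eta: "(\<Sum>h\<in>simplex (insert b0 B) (l - 1). eta h) = 0"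
    and IH: "2 * (real l + real (card B) - 1) * (\<Sum>u\<in>simplex B l. (xi u)\<^sup>2) \<le> dirichlet B l xi"
  shows "(\<Sum>u\<in>simplex B l. (xi u)\<^sup>2) + (\<Sum>h\<in>simplex (insert b0 B) (l - 1). (eta h)\<^sup>2)
           + real (card B) * real (card (simplex (insert b0 B) (l - 1))) * d\<^sup>2
       \<le> (\<Sum>h\<in>simplex (insert b0 B) (l - 1). \<Sum>c\<in>B. (d + eta h - xi (collapse b0 c (bump b0 h)))\<^sup>2)"
proof -
  define C1 where "C1 = simplex (insert b0 B) (l - 1)"
  define n where "n = real (card B)"
  define Q where "Q = (\<Sum>u\<in>simplex B l. (xi u)\<^sup>2)"
  define zeta where "zeta h = (\<Sum>c\<in>B. xi (collapse b0 c (bump b0 h)))" for h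
  have "(\<Sum>c\<in>B. (d + eta h - xi (collapse b0 c (bump b0 h)))\<^sup>2)
      = n * (d + eta h)\<^sup>2 - 2 * ((d + eta h) * zeta h) + (\<Sum>c\<in>B. (xi (collapse b0 c (bump b0 h)))\<^sup>2)" for h
    unfolding n_def zeta_def sum_square_diff_const by (simp only: mult.assoc)
  then have "(\<Sum>h\<in>C1. \<Sum>c\<in>B. (d + eta h - xi (collapse b0 c (bump b0 h)))\<^sup>2)
      = n * (\<Sum>h\<in>C1. (d + eta h)\<^sup>2) - 2 * (\<Sum>h\<in>C1. (d + eta h) * zeta h)
        + (\<Sum>h\<in>C1. \<Sum>c\<in>B. (xi (collapse b0 c (bump b0 h)))\<^sup>2)"
    by (simp add: sum.distrib sum_subtractf sum_distrib_left)
  also have "(\<Sum>h\<in>C1. (d + eta h) * zeta h) = d * (\<Sum>h\<in>C1. zeta h) + (\<Sum>h\<in>C1. eta h * zeta h)"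
    by (simp add: distrib_right sum.distrib sum_distrib_left)
  also have "(\<Sum>h\<in>C1. zeta h) = 0"
    using sum_collapse[OF b0 l, of xi] xi by (simp add: zeta_def C1_def)
  also have "(\<Sum>h\<in>C1. \<Sum>c\<in>B. (xi (collapse b0 c (bump b0 h)))\<^sup>2) = real l * Q"
    using sum_collapse[OF b0 l, of "\<lambda>u. (xi u)\<^sup>2"] by (simp add: C1_def Q_def)
  also have "(\<Sum>h\<in>C1. (d + eta h)\<^sup>2) = (\<Sum>h\<in>C1. (eta h)\<^sup>2) + real (card C1) * d\<^sup>2"
    using sum_square_centered[of C1 eta d] eta by (simp add: C1_def add.commute)
  finally have X: "(\<Sum>h\<in>C1. \<Sum>c\<in>B. (d + eta h - xi (collapse b0 c (bump b0 h)))\<^sup>2)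
      = n * (\<Sum>h\<in>C1. (eta h)\<^sup>2) + n * real (card C1) * d\<^sup>2 - 2 * (\<Sum>h\<in>C1. eta h * zeta h) + real l * Q"
    by (simp add: algebra_simps)
  have "(\<Sum>h\<in>C1. (zeta h)\<^sup>2) \<le> (n - 1) * ((real l - 1) * Q)"
    using sum_square_sum_collapse_le[OF b0 l IH] by (simp add: zeta_def C1_def Q_def n_def algebra_simps)
  moreover have "1 \<le> n" and "1 \<le> real l"
    using \<open>B \<noteq> {}\<close> l by (simp_all add: n_def Suc_le_eq card_gt_0_iff)
  moreover have "0 \<le> Q" by (simp add: Q_def sum_nonneg)
  ultimately have "2 * (\<Sum>h\<in>C1. eta h * zeta h) \<le> (n - 1) * (\<Sum>h\<in>C1. (eta h)\<^sup>2) + (real l - 1) * Q"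
    by (intro two_sum_mult_le) (simp_all add: C1_def)
  with X show ?thesis
    unfolding C1_def Q_def n_def by (simp only: left_diff_distrib mult_1_left)
qed

lemma weighted_means_identity:
  fixes N0 N1 m0 m1 L n :: real
  assumes "N0 * m0 + N1 * m1 = 0" and "N1 * n = L * N0"
  shows "(L + n) * (N0 * m0\<^sup>2 + N1 * m1\<^sup>2) = n * N1 * (m1 - m0)\<^sup>2"
proof -
  have a: "N0 * m0 = - (N1 * m1)" using assms(1) by linarith
  have "N0 * m0\<^sup>2 + N1 * m1\<^sup>2 = (N0 * m0) * m0 + N1 * m1 * m1"
    by (simp add: power2_eq_square mult.assoc)
  also have "\<dots> = N1 * m1 * (m1 - m0)"
    unfolding a by (simp add: right_diff_distrib)
  finally have b: "N0 * m0\<^sup>2 + N1 * m1\<^sup>2 = N1 * m1 * (m1 - m0)" .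
  have "n * N1 * m0 = L * (N0 * m0)"
    using assms(2) by (simp add: mult.commute mult.left_commute)
  then have "L * (N1 * m1) = - (n * N1 * m0)"
    unfolding a by simp
  then have "(L + n) * (N1 * m1) = n * N1 * (m1 - m0)"
    by (simp add: distrib_right right_diff_distrib)
  then have "(L + n) * (N1 * m1) * (m1 - m0) = n * N1 * (m1 - m0) * (m1 - m0)"
    by (simp only:)
  then show ?thesis
    unfolding b by (simp only: power2_eq_square mult.assoc)
qed

text \<open>The induction step adding a point \<open>b0\<close>: the configurations with \<open>b0\<close> empty and the ones
  with \<open>b0\<close> occupied are handled by the two induction hypotheses, and the moves emptying \<open>b0\<close>
  completely control both the variances and the difference of the two conditional means.\<close>

lemma dirichlet_poincare_insert:
  fixes x :: "('b::finite \<Rightarrow> nat) \<Rightarrow> real"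
  assumes b0: "b0 \<notin> B" and "B \<noteq> {}" and l: "0 < l"
    and IHB: "\<And>y. (\<Sum>g\<in>simplex B l. y g) = 0 \<Longrightarrow>
        2 * (real l + real (card B) - 1) * (\<Sum>g\<in>simplex B l. (y g)\<^sup>2) \<le> dirichlet B l y"
    and IHl: "\<And>y. (\<Sum>g\<in>simplex (insert b0 B) (l - 1). y g) = 0 \<Longrightarrow>
        2 * (real (l - 1) + real (card (insert b0 B)) - 1) * (\<Sum>g\<in>simplex (insert b0 B) (l - 1). (y g)\<^sup>2)
          \<le> dirichlet (insert b0 B) (l - 1) y"
    and x: "(\<Sum>g\<in>simplex (insert b0 B) l. x g) = 0"
  shows "2 * (real l + real (card (insert b0 B)) - 1) * (\<Sum>g\<in>simplex (insert b0 B) l. (x g)\<^sup>2)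
      \<le> dirichlet (insert b0 B) l x"
proof -
  define C0 where "C0 = simplex B l"
  define C1 where "C1 = simplex (insert b0 B) (l - 1)"
  define N0 where "N0 = real (card C0)"
  define N1 where "N1 = real (card C1)"
  define m0 where "m0 = (\<Sum>g\<in>C0. x g) / N0"
  define m1 where "m1 = (\<Sum>h\<in>C1. x (bump b0 h)) / N1"
  define xi where "xi g = x g - m0" for g
  define eta where "eta h = x (bump b0 h) - m1" for h
  define n where "n = real (card B)"
  have card_insert: "real (card (insert b0 B)) = n + 1"
    using b0 by (simp add: n_def)
  have xi0: "(\<Sum>g\<in>C0. xi g) = 0" and eta0: "(\<Sum>h\<in>C1. eta h) = 0"
    unfolding xi_def eta_def m0_def m1_def N0_def N1_def by (simp_all add: C0_def C1_def sum_minus_mean)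
  have "N0 * m0 = (\<Sum>g\<in>C0. x g)" and "N1 * m1 = (\<Sum>h\<in>C1. x (bump b0 h))"
    unfolding m0_def m1_def N0_def N1_def by (rule card_mult_mean, simp add: C0_def C1_def)+
  then have "N0 * m0 + N1 * m1 = 0"
    using x sum_simplex_insert[OF b0 l, of x] by (simp add: C0_def C1_def)
  moreover have "N1 * n = real l * N0"
    using sum_collapse[OF b0 l, of "\<lambda>_. 1"] by (simp add: N1_def n_def N0_def C0_def C1_def)
  ultimately have means: "(real l + n) * (N0 * m0\<^sup>2 + N1 * m1\<^sup>2) = n * N1 * (m1 - m0)\<^sup>2"
    by (rule weighted_means_identity)
  have "(\<Sum>g\<in>simplex (insert b0 B) l. (x g)\<^sup>2)
      = (\<Sum>g\<in>C0. (xi g)\<^sup>2) + N0 * m0\<^sup>2 + ((\<Sum>h\<in>C1. (eta h)\<^sup>2) + N1 * m1\<^sup>2)"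
    using sum_simplex_insert[OF b0 l, of "\<lambda>g. (x g)\<^sup>2"]
      sum_square_centered[of C0 xi m0] sum_square_centered[of C1 eta m1] xi0 eta0
    by (simp add: xi_def eta_def C0_def C1_def N0_def N1_def)
  then have "2 * (real l + real (card (insert b0 B)) - 1) * (\<Sum>g\<in>simplex (insert b0 B) l. (x g)\<^sup>2)
      = 2 * (real l + n) * ((\<Sum>g\<in>C0. (xi g)\<^sup>2) + (\<Sum>h\<in>C1. (eta h)\<^sup>2)) + 2 * (n * N1 * (m1 - m0)\<^sup>2)"
    using means card_insert by (simp add: algebra_simps)
  moreover have "2 * (real l + n - 1) * (\<Sum>g\<in>C0. (xi g)\<^sup>2) \<le> dirichlet B l x"
    using IHB[of xi] xi0 dirichlet_shift[of B l x m0] by (simp add: xi_def[abs_def] C0_def n_def)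
  moreover have "2 * (real l + n - 1) * (\<Sum>h\<in>C1. (eta h)\<^sup>2) \<le> dirichlet (insert b0 B) (l - 1) (\<lambda>h. x (bump b0 h))"
    using IHl[of eta] eta0 dirichlet_shift[of "insert b0 B" "l - 1" "\<lambda>h. x (bump b0 h)" m1] card_insert l
    by (simp add: eta_def[abs_def] C1_def of_nat_diff)
  moreover have "(\<Sum>g\<in>C0. (xi g)\<^sup>2) + (\<Sum>h\<in>C1. (eta h)\<^sup>2) + n * N1 * (m1 - m0)\<^sup>2
      \<le> (\<Sum>h\<in>C1. \<Sum>c\<in>B. (x (bump b0 h) - x (collapse b0 c (bump b0 h)))\<^sup>2)"
  proof -
    have "2 * (real l + n - 1) * (\<Sum>g\<in>C0. (xi g)\<^sup>2) \<le> dirichlet B l xi"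
      using IHB[of xi] xi0 by (simp add: C0_def n_def)
    from sum_collapse_square_ge[OF b0 \<open>B \<noteq> {}\<close> l _ _ this[unfolded C0_def n_def], of eta "m1 - m0"]
    show ?thesis
      using xi0 eta0 by (simp add: C0_def C1_def N1_def n_def xi_def eta_def algebra_simps)
  qed
  ultimately show ?thesis
    using dirichlet_insert[OF b0 l, of x] by (simp add: C1_def algebra_simps)
qed

theorem dirichlet_poincare:
  fixes x :: "('b::finite \<Rightarrow> nat) \<Rightarrow> real"
  assumes "(\<Sum>g\<in>simplex B l. x g) = 0"
  shows "2 * (real l + real (card B) - 1) * (\<Sum>g\<in>simplex B l. (x g)\<^sup>2) \<le> dirichlet B l x"
  using finite[of B] assms
proof (induction B arbitrary: l x rule: finite_induct)
  case empty
  then show ?case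
    using dirichlet_nonneg[of "{}" l x] by (cases "l = 0") (simp_all add: simplex_empty)
next
  case (insert b0 B)
  show ?case
  proof (cases "B = {}")
    case True
    then show ?thesis
      using insert.prems dirichlet_nonneg[of "insert b0 B" l x] by (simp add: simplex_singleton)
  next
    case False
    have "2 * (real l + real (card (insert b0 B)) - 1) * (\<Sum>g\<in>simplex (insert b0 B) l. (x g)\<^sup>2)
        \<le> dirichlet (insert b0 B) l x" if "(\<Sum>g\<in>simplex (insert b0 B) l. x g) = 0" for x
      using that
    proof (induction l arbitrary: x)
      case 0
      then show ?case
        using dirichlet_nonneg[of "insert b0 B" 0 x] by (simp add: simplex_0)
    next
      case (Suc l)
      show ?case
        by (rule dirichlet_poincare_insert[OF insert.hyps(2) False _ insert.IH _ Suc.prems])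
          (use Suc.IH in auto)
    qed
    then show ?thesis
      using insert.prems by blast
  qed
qed

section \<open>The Dirichlet form of an indicator\<close>

text \<open>For \<open>g b = 0\<close> the junk value \<open>transfer g b c 1\<close> is harmless: the weight \<open>g b\<close> vanishes.\<close>

definition boundary_weight :: "('b::finite \<Rightarrow> nat) set \<Rightarrow> nat \<Rightarrow> real" where
  "boundary_weight A l = (\<Sum>g\<in>simplex UNIV l. \<Sum>b\<in>UNIV. \<Sum>c\<in>UNIV - {b}.
      if g \<in> A \<and> transfer g b c 1 \<notin> A then real (g b) * real (g c + 1) else 0)"

definition exit_count :: "('b::finite \<Rightarrow> nat) set \<Rightarrow> nat \<Rightarrow> 'b \<Rightarrow> 'b \<Rightarrow> real" where
  "exit_count A l b c = (\<Sum>g\<in>simplex UNIV l. \<Sum>j\<in>{1..g b}. of_bool (g \<in> A \<and> transfer g b c j \<notin> A))"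

lemma nat_first_flip:
  assumes "P 0" and "\<not> P (j::nat)"
  shows "\<exists>k. 1 \<le> k \<and> k \<le> j \<and> P (k - 1) \<and> \<not> P k"
  using assms
proof (induction j)
  case (Suc j)
  then show ?case
    by (cases "P j") (auto intro: le_SucI)
qed simp

lemma inj_on_first_exit:
  assumes "b \<noteq> c"
  shows "inj_on (\<lambda>(g,k,j). (transfer g b c (k - 1), k - 1, j - k + 1)) {(g,k,j). 1 \<le> k \<and> k \<le> j \<and> j \<le> g b}"
proof (rule inj_onI)
  fix p q
  assume "p \<in> {(g,k,j). 1 \<le> k \<and> k \<le> j \<and> j \<le> g b}" and "q \<in> {(g,k,j). 1 \<le> k \<and> k \<le> j \<and> j \<le> g b}"
    and eq: "(\<lambda>(g,k,j). (transfer g b c (k - 1), k - 1, j - k + 1)) p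
      = (\<lambda>(g,k,j). (transfer g b c (k - 1), k - 1, j - k + 1)) q"
  moreover obtain g k j g' k' j' where p: "p = (g,k,j)" and q: "q = (g',k',j')"
    by (cases p, cases q) auto
  ultimately have k: "1 \<le> k" "k \<le> j" "j \<le> g b" "1 \<le> k'" "k' \<le> j'" "j' \<le> g' b"
    and eq: "transfer g b c (k - 1) = transfer g' b c (k' - 1)" "k - 1 = k' - 1" "j - k = j' - k'"
    by auto
  then have "k = k'" and "j = j'" by auto
  have "g = transfer (transfer g b c (k - 1)) c b (k - 1)"
    using assms k by (simp add: transfer_transfer_back)
  also have "\<dots> = transfer (transfer g' b c (k' - 1)) c b (k' - 1)"
    using eq(1) \<open>k = k'\<close> by simp
  also have "\<dots> = g'"
    using assms k by (simp add: transfer_transfer_back)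
  finally show "p = q"
    using p q \<open>k = k'\<close> \<open>j = j'\<close> by simp
qed

text \<open>Counting argument on the line through \<open>g\<close> in direction \<open>c - b\<close>: an exit \<open>(g, j)\<close> from \<open>A\<close>
  is charged to the first boundary edge \<open>h \<rightarrow> transfer h b c 1\<close> on the segment from \<open>g\<close> to
  \<open>transfer g b c j\<close>, and a boundary edge \<open>h\<close> is charged at most \<open>(h c + 1) * h b\<close> times.\<close>

lemma card_exits_le:
  assumes bc: "b \<noteq> c"
  shows "card {(g,j). g \<in> A \<and> g \<in> simplex UNIV l \<and> 1 \<le> j \<and> j \<le> g b \<and> transfer g b c j \<notin> A}
    \<le> (\<Sum>g\<in>{g \<in> simplex UNIV l. g \<in> A \<and> 1 \<le> g b \<and> transfer g b c 1 \<notin> A}. g b * (g c + 1))"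
proof -
  let ?X = "{(g,j). g \<in> A \<and> g \<in> simplex UNIV l \<and> 1 \<le> j \<and> j \<le> g b \<and> transfer g b c j \<notin> A}"
  let ?G = "{g \<in> simplex UNIV l. g \<in> A \<and> 1 \<le> g b \<and> transfer g b c 1 \<notin> A}"
  define S where "S = {(g,k,j). g \<in> A \<and> g \<in> simplex UNIV l \<and> 1 \<le> k \<and> k \<le> j \<and> j \<le> g b
      \<and> transfer g b c (k - 1) \<in> A \<and> transfer g b c k \<notin> A}"
  define f where "f = (\<lambda>(g,k,j). (transfer g b c (k - 1), k - 1, j - k + 1))"
  have finS: "finite S"
  proof (rule finite_subset)
    show "S \<subseteq> simplex UNIV l \<times> {..l} \<times> {..l}"
      unfolding S_def by clarsimp (meson simplex_le le_trans)
  qed simp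
  have "?X \<subseteq> (\<lambda>(g,k,j). (g,j)) ` S"
  proof
    fix p assume "p \<in> ?X"
    then obtain g j where p: "p = (g,j)" and g: "g \<in> A" "g \<in> simplex UNIV l" "1 \<le> j" "j \<le> g b"
      "transfer g b c j \<notin> A" by auto
    obtain k where "1 \<le> k" "k \<le> j" "transfer g b c (k - 1) \<in> A" "transfer g b c k \<notin> A"
      using nat_first_flip[of "\<lambda>k. transfer g b c k \<in> A" j] g by (auto simp: transfer_0)
    with g have "(g,k,j) \<in> S" by (auto simp: S_def)
    then show "p \<in> (\<lambda>(g,k,j). (g,j)) ` S" using p by force
  qed
  then have "card ?X \<le> card S"
    using card_mono[OF finite_imageI[OF finS]] card_image_le[OF finS] le_trans by blast
  also have "card S \<le> card (Sigma ?G (\<lambda>h. {..h c} \<times> {1..h b}))"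
  proof (rule card_inj_on_le)
    show "inj_on f S"
      unfolding f_def by (rule inj_on_subset[OF inj_on_first_exit[OF bc]]) (auto simp: S_def)
    show "f ` S \<subseteq> Sigma ?G (\<lambda>h. {..h c} \<times> {1..h b})"
    proof (rule image_subsetI)
      fix p assume "p \<in> S"
      then obtain g k j where p: "p = (g,k,j)" and h: "g \<in> A" "g \<in> simplex UNIV l" "1 \<le> k" "k \<le> j"
        "j \<le> g b" "transfer g b c (k - 1) \<in> A" "transfer g b c k \<notin> A"
        by (auto simp: S_def)
      have "transfer (transfer g b c (k - 1)) b c 1 = transfer g b c k"
        using transfer_Suc[OF bc, of "k - 1" g] h by simp
      moreover have "transfer g b c (k - 1) \<in> simplex UNIV l"
        using transfer_in_simplex[OF h(2) _ _ bc] h by simp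
      ultimately show "f p \<in> Sigma ?G (\<lambda>h. {..h c} \<times> {1..h b})"
        using p h bc by (auto simp: f_def transfer_def)
    qed
  qed (simp add: finite_SigmaI)
  also have "\<dots> = (\<Sum>g\<in>?G. g b * (g c + 1))"
    by (simp add: card_SigmaI card_cartesian_product mult.commute)
  finally show ?thesis .
qed

lemma exit_count_le:
  assumes "b \<noteq> c"
  shows "exit_count A l b c
    \<le> (\<Sum>g\<in>simplex UNIV l. if g \<in> A \<and> transfer g b c 1 \<notin> A then real (g b) * real (g c + 1) else 0)"
proof -
  let ?I = "Sigma (simplex UNIV l) (\<lambda>g. {1..g b})"
  have "exit_count A l b c = (\<Sum>(g,j)\<in>?I. of_bool (g \<in> A \<and> transfer g b c j \<notin> A))"
    unfolding exit_count_def by (rule sum.Sigma) auto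
  also have "\<dots> = (\<Sum>p\<in>{p \<in> ?I. fst p \<in> A \<and> transfer (fst p) b c (snd p) \<notin> A}. 1)"
    by (simp add: of_bool_def sum.inter_filter[symmetric] case_prod_beta)
  also have "\<dots> = real (card {(g,j). g \<in> A \<and> g \<in> simplex UNIV l \<and> 1 \<le> j \<and> j \<le> g b \<and> transfer g b c j \<notin> A})"
  proof -
    have "{p \<in> ?I. fst p \<in> A \<and> transfer (fst p) b c (snd p) \<notin> A}
        = {(g,j). g \<in> A \<and> g \<in> simplex UNIV l \<and> 1 \<le> j \<and> j \<le> g b \<and> transfer g b c j \<notin> A}"
      by auto
    then show ?thesis by simp
  qed
  also have "\<dots> \<le> (\<Sum>g\<in>{g \<in> simplex UNIV l. g \<in> A \<and> 1 \<le> g b \<and> transfer g b c 1 \<notin> A}. real (g b) * real (g c + 1))"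
    using card_exits_le[OF assms, of A l] by (simp only: of_nat_le_iff flip: of_nat_mult of_nat_sum)
  also have "\<dots> = (\<Sum>g\<in>simplex UNIV l. if g \<in> A \<and> transfer g b c 1 \<notin> A then real (g b) * real (g c + 1) else 0)"
  proof -
    have "(\<Sum>g\<in>{g \<in> simplex UNIV l. g \<in> A \<and> 1 \<le> g b \<and> transfer g b c 1 \<notin> A}. real (g b) * real (g c + 1))
        = (\<Sum>g\<in>simplex UNIV l. if g \<in> A \<and> 1 \<le> g b \<and> transfer g b c 1 \<notin> A then real (g b) * real (g c + 1) else 0)"
      by (rule sum.inter_filter) simp
    then show ?thesis
      by (simp add: Suc_le_eq) (intro sum.cong refl, auto)
  qed
  finally show ?thesis .
qed

lemma entry_count_eq_exit_count:
  assumes bc: "b \<noteq> c"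
  shows "(\<Sum>g\<in>simplex UNIV l. \<Sum>j\<in>{1..g b}. of_bool (g \<notin> A \<and> transfer g b c j \<in> A)) = exit_count A l c b"
proof -
  let ?I = "Sigma (simplex UNIV l) (\<lambda>g. {1..g b})"
  let ?J = "Sigma (simplex UNIV l) (\<lambda>g. {1..g c})"
  have "(\<Sum>(g,j)\<in>?I. of_bool (g \<notin> A \<and> transfer g b c j \<in> A))
      = (\<Sum>(g,j)\<in>?J. (of_bool (g \<in> A \<and> transfer g c b j \<notin> A) :: real))"
  proof (rule sum.reindex_bij_witness[where j = "\<lambda>(g,j). (transfer g b c j, j)" and i = "\<lambda>(g,j). (transfer g c b j, j)"])
    fix a assume "a \<in> ?I"
    moreover obtain g j where a: "a = (g,j)" by (cases a)
    ultimately have g: "g \<in> simplex UNIV l" "1 \<le> j" "j \<le> g b" by auto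
    show "(\<lambda>(g,j). (transfer g c b j, j)) ((\<lambda>(g,j). (transfer g b c j, j)) a) = a"
      and "(\<lambda>(g,j). of_bool (g \<in> A \<and> transfer g c b j \<notin> A)) ((\<lambda>(g,j). (transfer g b c j, j)) a)
        = (\<lambda>(g,j). of_bool (g \<notin> A \<and> transfer g b c j \<in> A)) a"
      using a g bc by (auto simp: transfer_transfer_back)
    have "transfer g b c j \<in> simplex UNIV l" using transfer_in_simplex[OF g(1) _ _ bc g(3)] by simp
    then show "(\<lambda>(g,j). (transfer g b c j, j)) a \<in> ?J" using a g by (simp add: transfer_def)
  next
    fix a assume "a \<in> ?J"
    moreover obtain g j where a: "a = (g,j)" by (cases a)
    ultimately have g: "g \<in> simplex UNIV l" "1 \<le> j" "j \<le> g c" by auto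
    show "(\<lambda>(g,j). (transfer g b c j, j)) ((\<lambda>(g,j). (transfer g c b j, j)) a) = a"
      using a g bc by (simp add: transfer_transfer_back)
    have "transfer g c b j \<in> simplex UNIV l" using transfer_in_simplex[OF g(1) _ _ bc[symmetric] g(3)] by simp
    then show "(\<lambda>(g,j). (transfer g c b j, j)) a \<in> ?I" using a g by (simp add: transfer_def)
  qed
  then show ?thesis
    unfolding exit_count_def by (simp add: sum.Sigma del: sum_of_bool_eq)
qed

lemma sum_off_diagonal_swap:
  fixes F :: "'b::finite \<Rightarrow> 'b \<Rightarrow> 'a::comm_monoid_add"
  shows "(\<Sum>b\<in>UNIV. \<Sum>c\<in>UNIV - {b}. F c b) = (\<Sum>b\<in>UNIV. \<Sum>c\<in>UNIV - {b}. F b c)"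
proof -
  have off: "(\<Sum>c\<in>UNIV - {b}. G c) = (\<Sum>c\<in>UNIV. if c = b then 0 else G c)" for b and G :: "'b \<Rightarrow> 'a"
    by (rule sum.mono_neutral_cong_left) auto
  show ?thesis
    unfolding off by (subst sum.swap) (simp add: eq_commute)
qed

lemma dirichlet_indicator_le:
  fixes A :: "('b::finite \<Rightarrow> nat) set"
  shows "dirichlet UNIV l (indicator A) \<le> 2 * boundary_weight A l"
proof -
  have sq: "(indicator A g - indicator A g')\<^sup>2
      = (of_bool (g \<in> A \<and> g' \<notin> A) + of_bool (g \<notin> A \<and> g' \<in> A) :: real)" for g g'
    by (simp add: indicator_def)
  have "dirichlet UNIV l (indicator A) = (\<Sum>b\<in>UNIV. \<Sum>c\<in>UNIV - {b}. \<Sum>g\<in>simplex UNIV l.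
      \<Sum>j\<in>{1..g b}. (indicator A g - indicator A (transfer g b c j))\<^sup>2)"
    unfolding dirichlet_def edge_energy_def by (subst sum.swap) (simp add: sum.swap[of _ "simplex UNIV l"])
  also have "\<dots> = (\<Sum>b\<in>UNIV. \<Sum>c\<in>UNIV - {b}. exit_count A l b c + exit_count A l c b)"
  proof (intro sum.cong refl)
    fix b c :: 'b assume "c \<in> UNIV - {b}"
    then have "b \<noteq> c" by auto
    show "(\<Sum>g\<in>simplex UNIV l. \<Sum>j\<in>{1..g b}. (indicator A g - indicator A (transfer g b c j))\<^sup>2)
        = exit_count A l b c + exit_count A l c b"
      unfolding sq using entry_count_eq_exit_count[OF \<open>b \<noteq> c\<close>, of A l]
      by (simp add: sum.distrib exit_count_def del: sum_of_bool_eq)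
  qed
  also have "\<dots> = 2 * (\<Sum>b\<in>UNIV. \<Sum>c\<in>UNIV - {b}. exit_count A l b c)"
    using sum_off_diagonal_swap[of "exit_count A l"] by (simp add: sum.distrib)
  also have "\<dots> \<le> 2 * (\<Sum>b\<in>UNIV. \<Sum>c\<in>UNIV - {b}. \<Sum>g\<in>simplex UNIV l.
      if g \<in> A \<and> transfer g b c 1 \<notin> A then real (g b) * real (g c + 1) else 0)"
    using exit_count_le[of _ _ A l] by (intro mult_left_mono sum_mono) auto
  also have "(\<Sum>b\<in>UNIV. \<Sum>c\<in>UNIV - {b}. \<Sum>g\<in>simplex UNIV l.
      if g \<in> A \<and> transfer g b c 1 \<notin> A then real (g b) * real (g c + 1) else 0) = boundary_weight A l"
    unfolding boundary_weight_def by (subst sum.swap) (intro sum.cong refl sum.swap)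
  finally show ?thesis .
qed

section \<open>Up-degrees and the shadow\<close>

lemma plus_unit_vec_eq_bump: "(\<lambda>c. f c + unit_vec b c) = bump b f"
  by (auto simp: unit_vec_def bump_def fun_eq_iff)

lemma mem_shadow_iff: "f \<in> shadow S \<longleftrightarrow> (\<exists>b. bump b f \<in> S)"
  by (simp add: shadow_def plus_unit_vec_eq_bump)

lemma bump_unbump: "g b \<noteq> 0 \<Longrightarrow> bump b (g(b := g b - 1)) = g"
  by (auto simp: bump_def fun_eq_iff)

lemma sum_bump_reindex:
  fixes F :: "('b::finite \<Rightarrow> nat) \<Rightarrow> 'b \<Rightarrow> real"
  shows "(\<Sum>f\<in>simplex UNIV T. \<Sum>b\<in>UNIV. real (Suc (f b)) * F (bump b f) b)
       = (\<Sum>g\<in>simplex UNIV (Suc T). \<Sum>b\<in>UNIV. real (g b) * F g b)"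
proof -
  let ?P = "simplex UNIV (Suc T) \<times> (UNIV::'b set)"
  let ?Q = "{(g,b) \<in> ?P. g b \<noteq> 0}"
  have "(\<Sum>g\<in>simplex UNIV (Suc T). \<Sum>b\<in>UNIV. real (g b) * F g b) = (\<Sum>(g,b)\<in>?Q. real (g b) * F g b)"
    by (subst sum.cartesian_product, rule sum.mono_neutral_right) auto
  also have "\<dots> = (\<Sum>(f,b)\<in>(simplex UNIV T :: ('b \<Rightarrow> nat) set) \<times> (UNIV :: 'b set). real (Suc (f b)) * F (bump b f) b)"
  proof (rule sum.reindex_bij_witness[where i = "\<lambda>(f,b). (bump b f, b)" and j = "\<lambda>(g,b). (g(b := g b - 1), b)"])
    fix a assume "a \<in> ?Q"
    moreover obtain g b where a: "a = (g,b)" by (cases a)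
    ultimately have g: "g \<in> simplex UNIV (Suc T)" "g b \<noteq> 0" by auto
    then show "(\<lambda>(f,b). (bump b f, b)) ((\<lambda>(g,b). (g(b := g b - 1), b)) a) = a"
      and "(\<lambda>(g,b). (g(b := g b - 1), b)) a \<in> simplex UNIV T \<times> UNIV"
      and "(\<lambda>(f,b). real (Suc (f b)) * F (bump b f) b) ((\<lambda>(g,b). (g(b := g b - 1), b)) a)
        = (\<lambda>(g,b). real (g b) * F g b) a"
      using a unbump_in_simplex[OF g] bump_unbump[of g b, OF g(2)] by simp_all
  next
    fix a assume "a \<in> (simplex UNIV T :: ('b \<Rightarrow> nat) set) \<times> (UNIV :: 'b set)"
    moreover obtain f b where a: "a = (f,b)" by (cases a)
    ultimately show "(\<lambda>(g,b). (g(b := g b - 1), b)) ((\<lambda>(f,b). (bump b f, b)) a) = a"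
      and "(\<lambda>(f,b). (bump b f, b)) a \<in> ?Q"
      using bump_in_simplex[of f T b] by (auto simp: bump_def fun_eq_iff)
  qed
  finally show ?thesis
    by (simp add: sum.cartesian_product)
qed

lemma card_simplex_Suc:
  "real (card (simplex UNIV (Suc T) :: ('b::finite \<Rightarrow> nat) set)) * real (Suc T)
     = real (card (simplex UNIV T :: ('b \<Rightarrow> nat) set)) * (real T + real CARD('b))"
proof -
  have "(\<Sum>f\<in>simplex UNIV T. \<Sum>b\<in>(UNIV :: 'b set). real (Suc (f b)) * 1)
      = (\<Sum>g\<in>simplex UNIV (Suc T). \<Sum>b\<in>(UNIV :: 'b set). real (g b) * 1)"
    by (rule sum_bump_reindex[where F = "\<lambda>_ _. 1"])
  moreover have "(\<Sum>b\<in>UNIV. real (Suc (f b))) = real T + real CARD('b)"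
    if "f \<in> simplex UNIV T" for f :: "'b \<Rightarrow> nat"
    using sum_simplex_real[OF that] by (simp add: sum.distrib)
  moreover have "(\<Sum>b\<in>UNIV. real (g b)) = real (Suc T)" if "g \<in> simplex UNIV (Suc T)" for g :: "'b \<Rightarrow> nat"
    using sum_simplex_real[OF that] by simp
  ultimately show ?thesis
    by (simp add: mult.commute)
qed

definition up_degree :: "('b::finite \<Rightarrow> nat) set \<Rightarrow> ('b \<Rightarrow> nat) \<Rightarrow> real" where
  "up_degree A f = (\<Sum>b\<in>UNIV. real (Suc (f b)) * indicator A (bump b f))"

lemma sum_indicator_subset: "finite S \<Longrightarrow> A \<subseteq> S \<Longrightarrow> (\<Sum>x\<in>S. indicator A x) = real (card A)"
  by (simp add: indicator_def inf.absorb2)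

lemma up_degree_eq_0: "f \<notin> shadow A \<Longrightarrow> up_degree A f = 0"
  by (simp add: up_degree_def mem_shadow_iff)

lemma sum_up_degree:
  assumes "A \<subseteq> simplex UNIV (Suc T)"
  shows "(\<Sum>f\<in>simplex UNIV T. up_degree A f) = real (Suc T) * real (card A)"
proof -
  have "(\<Sum>f\<in>simplex UNIV T. up_degree A f) = (\<Sum>g\<in>simplex UNIV (Suc T). \<Sum>b\<in>UNIV. real (g b) * indicator A g)"
    unfolding up_degree_def by (rule sum_bump_reindex)
  also have "\<dots> = (\<Sum>g\<in>simplex UNIV (Suc T). real (Suc T) * indicator A g)"
    by (rule sum.cong[OF refl]) (simp add: sum_simplex_real flip: sum_distrib_right)
  also have "\<dots> = real (Suc T) * real (card A)"
    using sum_indicator_subset[OF finite_simplex assms] by (simp flip: sum_distrib_left)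
  finally show ?thesis .
qed

text \<open>Removing an element at \<open>b\<close> from \<open>g \<in> A\<close> and adding one at \<open>c\<close> leads back into \<open>A\<close>,
  except along the boundary edges leaving \<open>g\<close>.\<close>

lemma up_degree_unbump:
  fixes A :: "('b::finite \<Rightarrow> nat) set"
  assumes g: "g \<in> simplex UNIV (Suc T)" and "g b \<noteq> 0" and "g \<in> A"
  shows "up_degree A (g(b := g b - 1))
       = real T + real CARD('b) - (\<Sum>c\<in>UNIV - {b}. if transfer g b c 1 \<notin> A then real (g c + 1) else 0)"
proof -
  let ?h = "g(b := g b - 1)"
  let ?H = "\<lambda>c. real (Suc (?h c)) * indicator A (bump c ?h)"
  have "?H b = real (g b)"
    using assms bump_unbump[of g b, OF \<open>g b \<noteq> 0\<close>] by simp
  moreover have "?H c = real (g c + 1) - (if transfer g b c 1 \<notin> A then real (g c + 1) else 0)"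
    if "c \<in> UNIV - {b}" for c
  proof -
    have "bump c ?h = transfer g b c 1" using that by (auto simp: transfer_def bump_def fun_eq_iff)
    then show ?thesis using that by simp
  qed
  moreover have "real (g b) + (\<Sum>c\<in>UNIV - {b}. real (g c + 1)) = real T + real CARD('b)"
  proof -
    have "real (g b) + (\<Sum>c\<in>UNIV - {b}. real (g c)) = real (Suc T)"
      using sum.remove[of UNIV b "\<lambda>c. real (g c)"] sum_simplex_real[OF g] by simp
    moreover have "card (UNIV - {b}) = CARD('b) - 1" and "1 \<le> CARD('b)"
      by (simp_all add: card_Diff_singleton Suc_le_eq card_gt_0_iff)
    ultimately show ?thesis
      by (simp add: sum.distrib of_nat_diff)
  qed
  ultimately show ?thesis
    unfolding up_degree_def sum.remove[of UNIV b, OF finite UNIV_I]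
    by (simp add: sum_subtractf)
qed

lemma sum_up_degree_unbump:
  fixes A :: "('b::finite \<Rightarrow> nat) set"
  assumes "g \<in> simplex UNIV (Suc T)"
  shows "(\<Sum>b\<in>UNIV. real (g b) * (indicator A g * up_degree A (g(b := g b - 1))))
       = indicator A g * (real (Suc T) * (real T + real CARD('b)))
         - (\<Sum>b\<in>UNIV. \<Sum>c\<in>UNIV - {b}. if g \<in> A \<and> transfer g b c 1 \<notin> A then real (g b) * real (g c + 1) else 0)"
proof (cases "g \<in> A")
  case True
  have "real (g b) * up_degree A (g(b := g b - 1))
      = real (g b) * (real T + real CARD('b))
        - (\<Sum>c\<in>UNIV - {b}. if transfer g b c 1 \<notin> A then real (g b) * real (g c + 1) else 0)" for b
  proof (cases "g b = 0")
    case False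
    then show ?thesis
      using up_degree_unbump[OF assms False True] by (simp add: right_diff_distrib sum_distrib_left if_distrib)
  qed (simp cong: if_cong)
  then show ?thesis
    using True sum_simplex_real[OF assms]
    by (simp add: sum_subtractf flip: sum_distrib_right)
qed simp

lemma sum_up_degree_square:
  fixes A :: "('b::finite \<Rightarrow> nat) set"
  assumes "A \<subseteq> simplex UNIV (Suc T)"
  shows "(\<Sum>f\<in>simplex UNIV T. (up_degree A f)\<^sup>2)
       = real (Suc T) * (real T + real CARD('b)) * real (card A) - boundary_weight A (Suc T)"
proof -
  have "(up_degree A f)\<^sup>2 = (\<Sum>b\<in>UNIV. real (Suc (f b))
      * (indicator A (bump b f) * up_degree A ((bump b f)(b := bump b f b - 1))))" for f
    by (simp add: power2_eq_square up_degree_def sum_distrib_right bump_def mult.assoc)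
  then have "(\<Sum>f\<in>simplex UNIV T. (up_degree A f)\<^sup>2)
      = (\<Sum>g\<in>simplex UNIV (Suc T). \<Sum>b\<in>UNIV. real (g b) * (indicator A g * up_degree A (g(b := g b - 1))))"
    using sum_bump_reindex[where F = "\<lambda>g b. indicator A g * up_degree A (g(b := g b - 1))"] by simp
  also have "\<dots> = (\<Sum>g\<in>simplex UNIV (Suc T). indicator A g * (real (Suc T) * (real T + real CARD('b)))
      - (\<Sum>b\<in>UNIV. \<Sum>c\<in>UNIV - {b}. if g \<in> A \<and> transfer g b c 1 \<notin> A then real (g b) * real (g c + 1) else 0))"
    by (rule sum.cong[OF refl]) (rule sum_up_degree_unbump)
  also have "\<dots> = real (Suc T) * (real T + real CARD('b)) * real (card A) - boundary_weight A (Suc T)"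
    using assms
    by (simp add: boundary_weight_def sum_subtractf sum_indicator_subset flip: sum_distrib_right)
  finally show ?thesis .
qed
section \<open>The shadow inequality\<close>

text \<open>The Poincare inequality for the indicator of \<open>A\<close>, centered at its density \<open>card A / N\<close>.\<close>

lemma boundary_weight_ge:
  fixes A :: "('b::finite \<Rightarrow> nat) set"
  assumes A: "A \<subseteq> simplex UNIV (Suc T)"
  defines "N \<equiv> real (card (simplex UNIV (Suc T) :: ('b \<Rightarrow> nat) set))"
  shows "(real T + real CARD('b)) * (real (card A) - (real (card A))\<^sup>2 / N) \<le> boundary_weight A (Suc T)"
proof -
  define m where "m = real (card A) / N"
  define v where "v = real (card A) - (real (card A))\<^sup>2 / N"
  have ind: "(\<Sum>g\<in>simplex UNIV (Suc T). indicator A g) = real (card A)"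
    by (rule sum_indicator_subset[OF finite_simplex A])
  have centered: "(\<Sum>g\<in>simplex UNIV (Suc T). indicator A g - m) = 0"
    using sum_minus_mean[of "simplex UNIV (Suc T)" "indicator A"] by (simp add: ind m_def N_def)
  have "(indicator A g)\<^sup>2 = (indicator A g :: real)" for g
    by (simp add: indicator_def)
  then have "(\<Sum>g\<in>simplex UNIV (Suc T). (indicator A g - m)\<^sup>2) + N * m\<^sup>2 = real (card A)"
    using sum_square_centered[OF finite_simplex centered, of m] ind by (simp add: N_def)
  moreover have "0 < N"
    using simplex_nonempty by (simp add: N_def card_gt_0_iff)
  ultimately have "(\<Sum>g\<in>simplex UNIV (Suc T). (indicator A g - m)\<^sup>2) = v"
    by (simp add: m_def v_def power2_eq_square)
  then have "2 * (real T + real CARD('b)) * v \<le> dirichlet UNIV (Suc T) (indicator A)"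
    using dirichlet_poincare[OF centered] dirichlet_shift[of UNIV "Suc T" "indicator A" m] by simp
  then have "(real T + real CARD('b)) * v \<le> boundary_weight A (Suc T)"
    using dirichlet_indicator_le[of "Suc T" A] by (simp add: algebra_simps)
  then show ?thesis
    unfolding v_def .
qed

lemma shadow_count_arith:
  fixes t n N NT a d :: real
  assumes "0 \<le> t" "0 < N" "0 < NT" "0 \<le> a" "0 \<le> d"
    and N: "N * (t + 1) = NT * (t + n)"
    and CS: "((t + 1) * a)\<^sup>2 \<le> d * ((t + n) * (t * a + a\<^sup>2 / N))"
  shows "(t + 1) * (a / N) \<le> d / NT * (t + a / N)"
proof (cases "a = 0")
  case False
  then have pos: "0 < (t + 1) * a * N" using assms by simp
  have "((t + 1) * a)\<^sup>2 * N * NT \<le> d * ((t + n) * (t * a + a\<^sup>2 / N)) * N * NT"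
    using CS assms by (simp add: mult_right_mono)
  also have "\<dots> = d * (N * (t + 1)) * a * (t * N + a)"
    unfolding N using assms by (simp add: field_simps power2_eq_square)
  finally have "((t + 1) * a * NT) * ((t + 1) * a * N) \<le> (d * (t * N + a)) * ((t + 1) * a * N)"
    by (simp add: power2_eq_square mult_ac)
  then have "(t + 1) * a * NT \<le> d * (t * N + a)"
    using pos by (rule mult_right_le_imp_le)
  then have "(t + 1) * a * NT / (N * NT) \<le> d * (t * N + a) / (N * NT)"
    by (rule divide_right_mono) (use assms in simp)
  also have "(t + 1) * a * NT / (N * NT) = (t + 1) * (a / N)"
    using assms by simp
  also have "d * (t * N + a) / (N * NT) = d / NT * (t + a / N)"
    using assms by (simp add: field_simps)
  finally show ?thesis .
qed (use assms in simp)

theorem mu_shadow_ge: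
  fixes S :: "('b::finite \<Rightarrow> nat) set"
  shows "(real T + 1) * mu (T + 1) S \<le> mu T (shadow S) * (real T + mu (T + 1) S)"
proof -
  define A where "A = S \<inter> simplex UNIV (Suc T)"
  define D where "D = shadow S \<inter> simplex UNIV T"
  define N where "N = real (card (simplex UNIV (Suc T) :: ('b \<Rightarrow> nat) set))"
  define NT where "NT = real (card (simplex UNIV T :: ('b \<Rightarrow> nat) set))"
  have A: "A \<subseteq> simplex UNIV (Suc T)" and D: "D \<subseteq> simplex UNIV T"
    by (auto simp: A_def D_def)
  have "0 < N" and "0 < NT"
    using simplex_nonempty by (simp_all add: N_def NT_def card_gt_0_iff)
  have "(\<Sum>f\<in>simplex UNIV T. up_degree A f) = (\<Sum>f\<in>D. up_degree A f)"
  proof (rule sum.mono_neutral_right[OF finite_simplex D])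
    have "shadow A \<subseteq> shadow S" by (auto simp: mem_shadow_iff A_def)
    then show "\<forall>f\<in>simplex UNIV T - D. up_degree A f = 0"
      by (auto simp: D_def intro: up_degree_eq_0)
  qed
  then have "(real (Suc T) * real (card A))\<^sup>2 \<le> (\<Sum>f\<in>D. (up_degree A f)\<^sup>2) * real (card D)"
    using sum_up_degree[OF A] sum_squared_le_sum_of_squares[of "up_degree A" D] by simp
  also have "\<dots> \<le> (\<Sum>f\<in>simplex UNIV T. (up_degree A f)\<^sup>2) * real (card D)"
    by (intro mult_right_mono sum_mono2[OF finite_simplex D]) auto
  also have "(\<Sum>f\<in>simplex UNIV T. (up_degree A f)\<^sup>2)
      \<le> (real T + real CARD('b)) * (real T * real (card A) + (real (card A))\<^sup>2 / N)"
    using sum_up_degree_square[OF A] boundary_weight_ge[OF A] by (simp add: N_def algebra_simps)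
  finally have "((real T + 1) * real (card A))\<^sup>2
      \<le> real (card D) * ((real T + real CARD('b)) * (real T * real (card A) + (real (card A))\<^sup>2 / N))"
    by (simp add: mult_right_mono mult.commute add.commute)
  moreover have "N * (real T + 1) = NT * (real T + real CARD('b))"
    using card_simplex_Suc[of T, where 'b = 'b] by (simp add: N_def NT_def add.commute)
  ultimately have "(real T + 1) * (real (card A) / N) \<le> real (card D) / NT * (real T + real (card A) / N)"
    using \<open>0 < N\<close> \<open>0 < NT\<close> by (intro shadow_count_arith) simp_all
  moreover have "mu (T + 1) S = real (card A) / N" and "mu T (shadow S) = real (card D) / NT"
    by (simp_all add: mu_def level_eq_simplex A_def D_def N_def NT_def)
  ultimately show ?thesis
    by simp
qed

lemma shadow_ratio_bound:
  fixes t x m \<delta> :: real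
  assumes "0 \<le> t" "0 \<le> x" "0 \<le> \<delta>" and m: "x / (t + 1 + x) \<le> m" and \<delta>: "(t + 1) * m \<le> \<delta> * (t + m)"
  shows "x / (t + x) \<le> \<delta>"
proof (cases "x = 0")
  case False
  then have "0 < x" using assms by simp
  have "0 < x / (t + 1 + x)"
    using \<open>0 < x\<close> assms by simp
  then have "0 < m" using m by linarith
  have "x \<le> m * (t + 1 + x)"
    using m \<open>0 < x\<close> assms by (simp add: divide_le_eq)
  moreover have "(t + 1) * m * (t + x) - x * (t + m) = t * (m * (t + 1 + x) - x)"
    by (simp add: algebra_simps)
  ultimately have "x * (t + m) \<le> (t + 1) * m * (t + x)"
    using assms by (metis diff_ge_0_iff_ge mult_nonneg_nonneg)
  also have "\<dots> \<le> \<delta> * (t + m) * (t + x)"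
    using \<delta> \<open>0 < x\<close> assms by (intro mult_right_mono) auto
  finally show ?thesis
    using \<open>0 < x\<close> \<open>0 < m\<close> assms by (simp add: divide_le_eq mult_ac)
qed (use assms in simp)

theorem theorem1:
  fixes S :: "('b::finite \<Rightarrow> nat) set" and T :: nat and x :: real
  assumes "x \<ge> 0"
    and "mu (T + 1) S \<ge> x / (real T + 1 + x)"
  shows "mu T (shadow S) \<ge> x / (real T + x)"
proof (rule shadow_ratio_bound)
  show "0 \<le> mu T (shadow S)"
    by (simp add: mu_def)
  show "(real T + 1) * mu (T + 1) S \<le> mu T (shadow S) * (real T + mu (T + 1) S)"
    by (rule mu_shadow_ge)
qed (use assms in auto)

end
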